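(* There is a deterministic sorting algorithm in the rank query model that runs in $k$ rounds and asks a total of $O(k\,n^{1+1/k})$ queries on every input of $n$ elements.
   Context: Rank query model: items $x_1,\ldots,x_n$ whose ranks form an unknown permutation of $\{1,\ldots,n\}$; a query asks "How is $\mathrm{rank}(x_i)$ compared to $m$?" with answer "$<$", "$=$" or "$>$"; sorting means determining all ranks. An algorithm runs in $k$ rounds if in each of $k$ rounds it submits a set of queries chosen depending only on answers of earlier rounds, then receives all answers. *)

theory Defs
  imports Complex_Main
begin

text \<open>Rank query model. Items are indexed 0..<n; their ranks form a permutation
  \<pi> of {1..n}. A query (i, m) asks how rank(x_i) compares to m.\<close>

datatype answer = Less | Equal | Greater

type_synonym query = "nat \<times> nat"

definition rank_perm :: "nat \<Rightarrow> (nat \<Rightarrow> nat) \<Rightarrow> bool" where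
  "rank_perm n \<pi> \<longleftrightarrow> bij_betw \<pi> {..<n} {1..n}"

definition ans :: "(nat \<Rightarrow> nat) \<Rightarrow> query \<Rightarrow> answer" where
  "ans \<pi> q = (if \<pi> (fst q) < snd q then Less
               else if \<pi> (fst q) = snd q then Equal else Greater)"

text \<open>A deterministic round-based strategy: in round j (counting from 0) it chooses
  a set of queries as a function of the answers received in earlier rounds,
  given as a partial map from already asked queries to their answers.\<close>
type_synonym strategy = "nat \<Rightarrow> (query \<Rightarrow> answer option) \<Rightarrow> query set"

fun asked :: "strategy \<Rightarrow> (nat \<Rightarrow> nat) \<Rightarrow> nat \<Rightarrow> query set" where
  "asked A \<pi> 0 = {}"
| "asked A \<pi> (Suc j) = asked A \<pi> j \<union>
     A j (\<lambda>q. if q \<in> asked A \<pi> j then Some (ans \<pi> q) else None)"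

definition known :: "strategy \<Rightarrow> (nat \<Rightarrow> nat) \<Rightarrow> nat \<Rightarrow> query \<Rightarrow> answer option" where
  "known A \<pi> j = (\<lambda>q. if q \<in> asked A \<pi> j then Some (ans \<pi> q) else None)"

definition round_queries :: "strategy \<Rightarrow> (nat \<Rightarrow> nat) \<Rightarrow> nat \<Rightarrow> query set" where
  "round_queries A \<pi> j = A j (known A \<pi> j)"

definition num_queries :: "strategy \<Rightarrow> (nat \<Rightarrow> nat) \<Rightarrow> nat \<Rightarrow> nat" where
  "num_queries A \<pi> k = (\<Sum>j<k. card (round_queries A \<pi> j))"

definition sorts_in_rounds :: "nat \<Rightarrow> nat \<Rightarrow> strategy \<Rightarrow> bool" where
  "sorts_in_rounds n k A \<longleftrightarrow>
     (\<forall>\<pi>. rank_perm n \<pi> \<longrightarrow>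
        (\<forall>j<k. finite (round_queries A \<pi> j) \<and> round_queries A \<pi> j \<subseteq> {..<n} \<times> UNIV)) \<and>
     (\<forall>\<pi> \<sigma>. rank_perm n \<pi> \<longrightarrow> rank_perm n \<sigma> \<longrightarrow>
        known A \<pi> k = known A \<sigma> k \<longrightarrow> (\<forall>i<n. \<pi> i = \<sigma> i))"

end

theory Submission
  imports Defs
begin

(* Take b = ceil (n powr (1/k)), so that n <= b^k. In round j every item is compared with each
   point of the grid of mesh b^(k-1-j) that is not ruled out by the answers received so far.
   In round j-1 the item was compared with both ends of the cell of mesh b^(k-j) containing its
   rank, so at most b + 1 grid points survive and each round asks at most n (b + 1) queries.
   In the last round the mesh is 1, so every item is compared with its own rank. *)

lemma asked_Suc: "asked A \<pi> (Suc j) = asked A \<pi> j \<union> round_queries A \<pi> j"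
  by (simp add: round_queries_def known_def)

lemma asked_eq_UN: "asked A \<pi> j = (\<Union>j'<j. round_queries A \<pi> j')"
  by (induction j) (auto simp: asked_Suc lessThan_Suc simp del: asked.simps(2))

lemma known_eq_Some_iff: "known A \<pi> j q = Some a \<longleftrightarrow> q \<in> asked A \<pi> j \<and> a = ans \<pi> q"
  by (auto simp: known_def)

lemma rank_perm_range: "rank_perm n \<pi> \<Longrightarrow> i < n \<Longrightarrow> 1 \<le> \<pi> i \<and> \<pi> i \<le> n"
  unfolding rank_perm_def bij_betw_def by auto

(* Ranks start at 1, so the grid of mesh s is {m. 1 \<le> m \<and> s dvd m - 1}, and for r \<ge> 1
   cell_start s r is the largest grid point not exceeding r. *)
definition cell_start :: "nat \<Rightarrow> nat \<Rightarrow> nat" where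
  "cell_start s r = (r - 1) div s * s + 1"

lemma cell_start_ge_1: "1 \<le> cell_start s r"
  by (simp add: cell_start_def)

lemma cell_start_le: "1 \<le> r \<Longrightarrow> cell_start s r \<le> r"
  unfolding cell_start_def using div_times_less_eq_dividend[of "r - 1" s] by linarith

lemma less_cell_start_add: "0 < s \<Longrightarrow> r < cell_start s r + s"
  using dividend_less_div_times[of s "r - 1"] by (simp add: cell_start_def)

lemma le_cell_start:
  assumes "s dvd m - 1" "1 \<le> m" "m \<le> r"
  shows "m \<le> cell_start s r"
proof -
  have "m - 1 = (m - 1) div s * s" using assms(1) by simp
  also have "\<dots> \<le> (r - 1) div s * s" using assms(3) by (intro mult_le_mono1 div_le_mono) simp
  finally show ?thesis using assms(2) by (simp add: cell_start_def)
qed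

lemma cell_start_add_le:
  assumes "0 < s" "s dvd m - 1" "1 \<le> m" "1 \<le> r" "r < m"
  shows "cell_start s r + s \<le> m"
proof -
  have "(r - 1) div s < (m - 1) div s"
  proof (rule ccontr)
    assume "\<not> ?thesis"
    then have "(m - 1) div s * s \<le> (r - 1) div s * s" by simp
    also have "\<dots> \<le> r - 1" by simp
    finally show False using assms(3-5) dvd_div_mult_self[OF assms(2)] by linarith
  qed
  then have "((r - 1) div s + 1) * s \<le> (m - 1) div s * s" by (intro mult_le_mono1) simp
  then show ?thesis using assms(2,3) by (simp add: cell_start_def algebra_simps)
qed

lemma grid_point_between:
  fixes s G m b :: nat
  assumes "0 < s" "s dvd G - 1" "s dvd m - 1" "1 \<le> G" "G \<le> m" "m \<le> G + b * s"
  shows "\<exists>c\<le>b. m = G + c * s"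
proof -
  have "s dvd (m - 1) - (G - 1)" using assms(3,2) by (rule dvd_diff_nat)
  moreover have "(m - 1) - (G - 1) = m - G" using assms(4,5) by simp
  ultimately obtain c where c: "m - G = c * s" by (metis dvd_def mult.commute)
  then have "c * s \<le> b * s" using assms(6) by linarith
  then have "c \<le> b" using assms(1) by simp
  then show ?thesis using c assms(5) by (intro exI[of _ c]) simp
qed

definition refine_strategy :: "nat \<Rightarrow> nat \<Rightarrow> nat \<Rightarrow> strategy" where
  "refine_strategy n k b j K = {(i, m). i < n \<and> 1 \<le> m \<and> m \<le> n \<and> b ^ (k - Suc j) dvd m - 1 \<and>
      (\<forall>m'. K (i, m') = Some Less \<longrightarrow> m \<le> m') \<and>
      (\<forall>m' a. K (i, m') = Some a \<and> a \<noteq> Less \<longrightarrow> m' \<le> m)}"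

lemma mem_round_queries_refine_iff:
  "(i, m) \<in> round_queries (refine_strategy n k b) \<pi> j \<longleftrightarrow>
     i < n \<and> 1 \<le> m \<and> m \<le> n \<and> b ^ (k - Suc j) dvd m - 1 \<and>
     (\<forall>m'. (i, m') \<in> asked (refine_strategy n k b) \<pi> j \<longrightarrow>
        (\<pi> i < m' \<longrightarrow> m \<le> m') \<and> (m' \<le> \<pi> i \<longrightarrow> m' \<le> m))"
  by (auto simp: round_queries_def refine_strategy_def known_eq_Some_iff ans_def not_less)

lemma round_queries_refine_subset: "round_queries (refine_strategy n k b) \<pi> j \<subseteq> {..<n} \<times> {1..n}"
  by (auto simp: round_queries_def refine_strategy_def)

lemma asked_refine_on_grid:
  assumes "(i, m) \<in> asked (refine_strategy n k b) \<pi> j"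
  shows "1 \<le> m \<and> b ^ (k - j) dvd m - 1"
proof -
  obtain j' where "j' < j" and q: "(i, m) \<in> round_queries (refine_strategy n k b) \<pi> j'"
    using assms by (auto simp: asked_eq_UN)
  then have "b ^ (k - j) dvd b ^ (k - Suc j')" by (intro le_imp_power_dvd) simp
  then show ?thesis using q by (auto simp: mem_round_queries_refine_iff intro: dvd_trans)
qed

lemma cell_endpoints_queried:
  assumes "rank_perm n \<pi>" "i < n" "j < k" "1 \<le> b"
  defines "s \<equiv> b ^ (k - Suc j)"
  shows "(i, cell_start s (\<pi> i)) \<in> round_queries (refine_strategy n k b) \<pi> j"
    and "cell_start s (\<pi> i) + s \<le> n \<Longrightarrow>
           (i, cell_start s (\<pi> i) + s) \<in> round_queries (refine_strategy n k b) \<pi> j"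
proof -
  have r: "1 \<le> \<pi> i" "\<pi> i \<le> n" using rank_perm_range[OF assms(1,2)] by auto
  have "0 < s" using assms(4) by (simp add: s_def)
  have grid: "1 \<le> m' \<and> s dvd m' - 1" if "(i, m') \<in> asked (refine_strategy n k b) \<pi> j" for m'
  proof -
    have "s dvd b ^ (k - j)" unfolding s_def using assms(3) by (intro le_imp_power_dvd) simp
    then show ?thesis using asked_refine_on_grid[OF that] dvd_trans by blast
  qed
  let ?G = "cell_start s (\<pi> i)"
  have "s dvd ?G - 1" "s dvd ?G + s - 1" "1 \<le> ?G" "?G \<le> \<pi> i" "\<pi> i < ?G + s"
    using cell_start_le[OF r(1)] less_cell_start_add[OF \<open>0 < s\<close>] by (auto simp: cell_start_def)
  then show "(i, ?G) \<in> round_queries (refine_strategy n k b) \<pi> j"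
    and "?G + s \<le> n \<Longrightarrow> (i, ?G + s) \<in> round_queries (refine_strategy n k b) \<pi> j"
    unfolding mem_round_queries_refine_iff s_def[symmetric]
    using assms(2) r grid le_cell_start cell_start_add_le[OF \<open>0 < s\<close> _ _ r(1)]
    by (auto simp del: One_nat_def)
qed

lemma round_queries_refine_in_cell:
  assumes "rank_perm n \<pi>" "j < k" "1 \<le> b" "n \<le> b ^ k"
    and q: "(i, m) \<in> round_queries (refine_strategy n k b) \<pi> j"
  shows "\<exists>c\<le>b. m = cell_start (b ^ (k - j)) (\<pi> i) + c * b ^ (k - Suc j)"
proof -
  define s where "s = b ^ (k - Suc j)"
  define G where "G = cell_start (b * s) (\<pi> i)"
  have bs: "b ^ (k - j) = b * s"
    using assms(2) by (simp add: s_def Suc_diff_Suc flip: power_Suc)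
  have "0 < s" using assms(3) by (simp add: s_def)
  from q have i: "i < n" and m: "1 \<le> m" "m \<le> n" "s dvd m - 1"
    and consistent: "\<And>m'. (i, m') \<in> asked (refine_strategy n k b) \<pi> j \<Longrightarrow>
        (\<pi> i < m' \<longrightarrow> m \<le> m') \<and> (m' \<le> \<pi> i \<longrightarrow> m' \<le> m)"
    by (simp_all add: mem_round_queries_refine_iff s_def)
  have r: "1 \<le> \<pi> i" "\<pi> i \<le> n" using rank_perm_range[OF assms(1) i] by auto
  have "G \<le> m \<and> m \<le> G + b * s"
  proof (cases j)
    case 0
    then have "\<pi> i - 1 < b * s" using r assms(4) bs by simp
    then have "G = 1" by (simp add: G_def cell_start_def)
    then show ?thesis using m assms(4) 0 bs by simp
  next
    case (Suc j')
    have queried: "(i, G') \<in> asked (refine_strategy n k b) \<pi> j"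
      if "(i, G') \<in> round_queries (refine_strategy n k b) \<pi> j'" for G'
      using that Suc by (simp add: asked_Suc del: asked.simps)
    have "j' < k" "b * s = b ^ (k - Suc j')" using Suc assms(2) bs by simp_all
    note endpoints = cell_endpoints_queried[OF assms(1) i this(1) assms(3), folded this(2), folded G_def]
    have "G \<le> m"
      using consistent[OF queried[OF endpoints(1)]] cell_start_le[OF r(1)] by (simp add: G_def)
    moreover have "m \<le> G + b * s"
    proof (cases "G + b * s \<le> n")
      case True
      have "\<pi> i < G + b * s" using \<open>0 < s\<close> assms(3) less_cell_start_add by (simp add: G_def)
      then show ?thesis using consistent[OF queried[OF endpoints(2)[OF True]]] by simp
    next
      case False
      then show ?thesis using m by simp
    qed
    ultimately show ?thesis ..
  qed
  moreover have "s dvd G - 1" by (simp add: G_def cell_start_def)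
  ultimately have "\<exists>c\<le>b. m = G + c * s"
    using grid_point_between[OF \<open>0 < s\<close> _ m(3)] cell_start_ge_1 G_def by blast
  then show ?thesis by (simp add: G_def bs s_def)
qed

lemma card_round_queries_refine:
  assumes "rank_perm n \<pi>" "j < k" "1 \<le> b" "n \<le> b ^ k"
  shows "card (round_queries (refine_strategy n k b) \<pi> j) \<le> n * (b + 1)"
proof -
  let ?point = "\<lambda>(i, c). (i, cell_start (b ^ (k - j)) (\<pi> i) + c * b ^ (k - Suc j))"
  have "round_queries (refine_strategy n k b) \<pi> j \<subseteq> ?point ` ({..<n} \<times> {..b})"
  proof
    fix q assume q: "q \<in> round_queries (refine_strategy n k b) \<pi> j"
    obtain i m where [simp]: "q = (i, m)" by fastforce
    have "i < n" using q round_queries_refine_subset[of n k b \<pi> j] by auto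
    moreover obtain c where "c \<le> b" "m = cell_start (b ^ (k - j)) (\<pi> i) + c * b ^ (k - Suc j)"
      using round_queries_refine_in_cell[OF assms] q by auto
    ultimately show "q \<in> ?point ` ({..<n} \<times> {..b})" by force
  qed
  then have "card (round_queries (refine_strategy n k b) \<pi> j) \<le> card (?point ` ({..<n} \<times> {..b}))"
    by (intro card_mono) auto
  also have "\<dots> \<le> card ({..<n} \<times> {..b})" by (rule card_image_le) simp
  finally show ?thesis by (simp add: card_cartesian_product)
qed

lemma num_queries_refine_le:
  assumes "rank_perm n \<pi>" "1 \<le> b" "n \<le> b ^ k"
  shows "num_queries (refine_strategy n k b) \<pi> k \<le> k * (n * (b + 1))"
proof -
  have "num_queries (refine_strategy n k b) \<pi> k \<le> (\<Sum>j<k. n * (b + 1))"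
    unfolding num_queries_def using card_round_queries_refine[OF assms(1) _ assms(2,3)]
    by (intro sum_mono) simp
  then show ?thesis by simp
qed

lemma refine_strategy_sorts:
  assumes "1 \<le> b" "1 \<le> k"
  shows "sorts_in_rounds n k (refine_strategy n k b)"
  unfolding sorts_in_rounds_def
proof (intro conjI allI impI)
  fix \<pi> j
  show "finite (round_queries (refine_strategy n k b) \<pi> j)"
    by (rule finite_subset[OF round_queries_refine_subset]) simp
  show "round_queries (refine_strategy n k b) \<pi> j \<subseteq> {..<n} \<times> UNIV"
    using round_queries_refine_subset by blast
next
  fix \<pi> \<sigma> i
  assume \<pi>: "rank_perm n \<pi>" and "rank_perm n \<sigma>" and i: "i < n"
    and same: "known (refine_strategy n k b) \<pi> k = known (refine_strategy n k b) \<sigma> k"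
  have last: "k - 1 < k" "k - Suc (k - 1) = 0" "Suc (k - 1) = k" using assms(2) by auto
  have "cell_start (b ^ (k - Suc (k - 1))) (\<pi> i) = \<pi> i"
    using last(2) rank_perm_range[OF \<pi> i] by (simp add: cell_start_def)
  then have "(i, \<pi> i) \<in> round_queries (refine_strategy n k b) \<pi> (k - 1)"
    using cell_endpoints_queried(1)[OF \<pi> i last(1) assms(1)] by simp
  then have "(i, \<pi> i) \<in> asked (refine_strategy n k b) \<pi> k"
    using asked_Suc[of _ \<pi> "k - 1"] last(3) by auto
  then have "known (refine_strategy n k b) \<pi> k (i, \<pi> i) = Some Equal"
    by (simp add: known_def ans_def)
  then have "known (refine_strategy n k b) \<sigma> k (i, \<pi> i) = Some Equal"
    by (simp add: same)
  then show "\<pi> i = \<sigma> i"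
    by (auto simp: known_eq_Some_iff ans_def split: if_splits)
qed

lemma exists_root_base:
  assumes "1 \<le> k"
  obtains b :: nat where "1 \<le> b" "n \<le> b ^ k" "real n * (real b + 1) \<le> 3 * real n powr (1 + 1 / real k)"
proof (cases "n = 0")
  case True
  then show ?thesis by (intro that[of 1]) simp_all
next
  case False
  define x where "x = real n powr (1 / real k)"
  have "1 \<le> x" unfolding x_def using False by (intro ge_one_powr_ge_zero) auto
  have "real n = x ^ k" unfolding x_def using False assms by (simp add: powr_powr flip: powr_realpow)
  also have "\<dots> \<le> real (nat \<lceil>x\<rceil>) ^ k" using \<open>1 \<le> x\<close> by (intro power_mono) auto
  finally have "n \<le> nat \<lceil>x\<rceil> ^ k" by (simp flip: of_nat_power)
  moreover have "real n * (real (nat \<lceil>x\<rceil>) + 1) \<le> real n * (3 * x)"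
    using \<open>1 \<le> x\<close> by (intro mult_left_mono) linarith+
  moreover have "real n powr (1 + 1 / real k) = real n * x"
    unfolding x_def using False by (simp add: powr_add)
  moreover have "1 \<le> nat \<lceil>x\<rceil>" using \<open>1 \<le> x\<close> by linarith
  ultimately show ?thesis by (intro that[of "nat \<lceil>x\<rceil>"]) simp_all
qed

theorem proposition16:
  shows "\<exists>C::real. C > 0 \<and>
    (\<forall>k n. k \<ge> 1 \<longrightarrow>
      (\<exists>A. sorts_in_rounds n k A \<and>
        (\<forall>\<pi>. rank_perm n \<pi> \<longrightarrow>
           real (num_queries A \<pi> k) \<le> C * real k * real n powr (1 + 1 / real k))))"
proof (intro exI[of _ 3] conjI allI impI)
  fix k n :: nat
  assume k: "k \<ge> 1"
  obtain b where b: "1 \<le> b" "n \<le> b ^ k"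
    and base: "real n * (real b + 1) \<le> 3 * real n powr (1 + 1 / real k)"
    using exists_root_base[OF k] .
  have "real (num_queries (refine_strategy n k b) \<pi> k) \<le> 3 * real k * real n powr (1 + 1 / real k)"
    if "rank_perm n \<pi>" for \<pi>
  proof -
    have "real (num_queries (refine_strategy n k b) \<pi> k) \<le> real (k * (n * (b + 1)))"
      using num_queries_refine_le[OF that b] by (rule of_nat_mono)
    also have "\<dots> = real k * (real n * (real b + 1))" by (simp add: algebra_simps)
    also have "\<dots> \<le> real k * (3 * real n powr (1 + 1 / real k))"
      using base by (intro mult_left_mono) simp_all
    finally show ?thesis by simp
  qed
  then show "\<exists>A. sorts_in_rounds n k A \<and>
      (\<forall>\<pi>. rank_perm n \<pi> \<longrightarrow>
         real (num_queries A \<pi> k) \<le> 3 * real k * real n powr (1 + 1 / real k))"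
    using refine_strategy_sorts[OF b(1) k] by blast
qed simp

end
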